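(* Let $\mathcal{H}$ be a real Hilbert space, $\alpha,\beta>0$, and $f(\theta)=\beta\exp\big(\frac{\|\theta\|^2}{2\alpha}\big)$ for $\theta\in\mathcal{H}$. Then for all $w\in\mathcal{H}$, \[ f^*(w)\ \le\ \|w\|\sqrt{2\alpha\log\Big(\frac{\sqrt{\alpha}\,\|w\|}{\beta}+1\Big)}-\beta. \]
   Context: $f^*(w)=\sup_{\theta\in\mathcal{H}}(\langle\theta,w\rangle-f(\theta))$ is the Fenchel conjugate. *)

theory Defs
  imports "HOL-Analysis.Analysis"
begin

definition fenchel_conj :: "('a::real_inner \<Rightarrow> real) \<Rightarrow> 'a \<Rightarrow> ereal" where
  "fenchel_conj f w = (SUP \<theta>. ereal (inner \<theta> w - f \<theta>))"

end

theory Submission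
  imports Defs
begin

text \<open>By Cauchy--Schwarz, \<open>\<langle>\<theta>, w\<rangle> - f \<theta>\<close> is at most \<open>t \<parallel>w\<parallel> - \<beta> exp (t\<^sup>2 / (2\<alpha>))\<close> with
  \<open>t = \<parallel>\<theta>\<parallel>\<close>, so everything reduces to a one-variable inequality, which after rescaling reads
  \<open>u \<rho> - exp (u\<^sup>2/2) \<le> \<rho> M - 1\<close> with \<open>M = sqrt (2 ln (1 + \<rho>))\<close>, i.e. \<open>exp (M\<^sup>2/2) = 1 + \<rho>\<close>.
  For \<open>u \<le> M\<close> this is immediate from \<open>exp \<ge> 1\<close>. For \<open>u > M\<close> the tangent of \<open>exp (u\<^sup>2/2)\<close>
  at \<open>M\<close> has slope \<open>(1 + \<rho>) M\<close>, and \<open>(1 + \<rho>) M \<ge> \<rho>\<close> follows from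
  \<open>exp (m\<^sup>2/2) (1 - m) \<le> exp (m\<^sup>2/2 - m) \<le> 1\<close> for \<open>0 \<le> m \<le> 1\<close>.\<close>

lemma exp_half_square_mult_one_minus_le:
  fixes m :: real
  assumes "m \<ge> 0"
  shows "exp (m\<^sup>2 / 2) * (1 - m) \<le> 1"
proof (cases "m \<le> 1")
  case True
  have "exp (m\<^sup>2 / 2) * (1 - m) \<le> exp (m\<^sup>2 / 2) * exp (- m)"
    using True exp_ge_add_one_self[of "- m"] by (intro mult_left_mono) auto
  also have "\<dots> = exp (m\<^sup>2 / 2 - m)"
    by (simp add: exp_add [symmetric])
  also have "\<dots> \<le> 1"
    using True assms mult_left_le[of m m] by (simp add: power2_eq_square)
  finally show ?thesis .
next
  case False
  then show ?thesis
    by (simp add: mult_nonneg_nonpos order.trans [of _ 0])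
qed

lemma le_one_plus_mult_sqrt_two_ln_one_plus:
  fixes \<rho> :: real
  assumes "\<rho> \<ge> 0"
  shows "\<rho> \<le> (1 + \<rho>) * sqrt (2 * ln (1 + \<rho>))"
proof -
  define M where "M = sqrt (2 * ln (1 + \<rho>))"
  have "M \<ge> 0"
    using assms by (simp add: M_def)
  moreover have "exp (M\<^sup>2 / 2) = 1 + \<rho>"
    using assms by (simp add: M_def)
  ultimately have "(1 + \<rho>) * (1 - M) \<le> 1"
    using exp_half_square_mult_one_minus_le by metis
  then show ?thesis
    by (simp add: M_def algebra_simps)
qed

lemma mult_minus_exp_half_square_le:
  fixes u \<rho> :: real
  assumes "\<rho> \<ge> 0"
  shows "u * \<rho> - exp (u\<^sup>2 / 2) \<le> \<rho> * sqrt (2 * ln (1 + \<rho>)) - 1"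
proof -
  define M where "M = sqrt (2 * ln (1 + \<rho>))"
  have exp_M: "exp (M\<^sup>2 / 2) = 1 + \<rho>"
    using assms by (simp add: M_def)
  have "exp (u\<^sup>2 / 2) \<ge> 1 + \<rho> * (u - M)"
  proof (cases "u \<le> M")
    case True
    have "exp (u\<^sup>2 / 2) \<ge> 1"
      by simp
    moreover have "\<rho> * u \<le> \<rho> * M"
      using True assms by (rule mult_left_mono)
    ultimately show ?thesis
      by (simp only: right_diff_distrib)
  next
    case False
    have slope: "\<rho> \<le> (1 + \<rho>) * M"
      using le_one_plus_mult_sqrt_two_ln_one_plus[OF assms] by (simp add: M_def)
    have "u\<^sup>2 / 2 - M\<^sup>2 / 2 \<ge> M * (u - M)"
      using zero_le_power2[of "u - M"] by (simp add: power2_eq_square algebra_simps)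
    then have "exp (u\<^sup>2 / 2 - M\<^sup>2 / 2) \<ge> 1 + M * (u - M)"
      using exp_ge_add_one_self[of "u\<^sup>2 / 2 - M\<^sup>2 / 2"] by linarith
    then have "(1 + \<rho>) * exp (u\<^sup>2 / 2 - M\<^sup>2 / 2) \<ge> (1 + \<rho>) * (1 + M * (u - M))"
      using assms by (intro mult_left_mono) auto
    moreover have "(1 + \<rho>) * exp (u\<^sup>2 / 2 - M\<^sup>2 / 2) = exp (u\<^sup>2 / 2)"
      using assms by (simp add: exp_diff exp_M)
    ultimately have "exp (u\<^sup>2 / 2) \<ge> (1 + \<rho>) * (1 + M * (u - M))"
      by simp
    also have "(1 + \<rho>) * (1 + M * (u - M)) \<ge> 1 + \<rho> * (u - M)"
      using slope assms False mult_right_mono[OF slope, of "u - M"]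
      by (simp add: algebra_simps)
    finally show ?thesis .
  qed
  then show ?thesis
    by (simp add: M_def algebra_simps)
qed

lemma mult_minus_scaled_exp_square_le:
  fixes \<alpha> \<beta> r t :: real
  assumes "\<alpha> > 0" and "\<beta> > 0" and "r \<ge> 0"
  shows "t * r - \<beta> * exp (t\<^sup>2 / (2 * \<alpha>))
    \<le> r * sqrt (2 * \<alpha> * ln (sqrt \<alpha> * r / \<beta> + 1)) - \<beta>"
proof -
  define s where "s = sqrt \<alpha>"
  define \<rho> where "\<rho> = s * r / \<beta>"
  have s: "s > 0" "s\<^sup>2 = \<alpha>"
    using assms by (simp_all add: s_def)
  have "\<rho> \<ge> 0"
    using s assms by (simp add: \<rho>_def)
  then have "(t / s) * \<rho> - exp ((t / s)\<^sup>2 / 2) \<le> \<rho> * sqrt (2 * ln (1 + \<rho>)) - 1"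
    by (rule mult_minus_exp_half_square_le)
  moreover have "\<beta> * ((t / s) * \<rho> - exp ((t / s)\<^sup>2 / 2))
      = t * r - \<beta> * exp (t\<^sup>2 / (2 * \<alpha>))"
    using s assms by (simp add: \<rho>_def power_divide right_diff_distrib)
  moreover have "\<beta> * (\<rho> * sqrt (2 * ln (1 + \<rho>)) - 1)
      = r * sqrt (2 * \<alpha> * ln (sqrt \<alpha> * r / \<beta> + 1)) - \<beta>"
    using s assms by (simp add: \<rho>_def s_def real_sqrt_mult right_diff_distrib add.commute)
  ultimately show ?thesis
    using assms(2) by (metis mult_le_cancel_left_pos)
qed

theorem lemma14:
  fixes \<alpha> \<beta> :: real and w :: "'a::{real_inner, complete_space}"
  assumes "\<alpha> > 0" and "\<beta> > 0"
  shows "fenchel_conj (\<lambda>\<theta>::'a. \<beta> * exp (norm \<theta> ^ 2 / (2 * \<alpha>))) w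
     \<le> ereal (norm w * sqrt (2 * \<alpha> * ln (sqrt \<alpha> * norm w / \<beta> + 1)) - \<beta>)"
  unfolding fenchel_conj_def
proof (rule SUP_least)
  fix \<theta> :: 'a
  have "inner \<theta> w \<le> norm \<theta> * norm w"
    by (rule norm_cauchy_schwarz)
  moreover have "norm \<theta> * norm w - \<beta> * exp (norm \<theta> ^ 2 / (2 * \<alpha>))
      \<le> norm w * sqrt (2 * \<alpha> * ln (sqrt \<alpha> * norm w / \<beta> + 1)) - \<beta>"
    using assms by (intro mult_minus_scaled_exp_square_le) auto
  ultimately show "ereal (inner \<theta> w - \<beta> * exp (norm \<theta> ^ 2 / (2 * \<alpha>)))
      \<le> ereal (norm w * sqrt (2 * \<alpha> * ln (sqrt \<alpha> * norm w / \<beta> + 1)) - \<beta>)"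
    by simp
qed

end
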